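(* Let $w\in\mathfrak{S}_n$ with $\{k,k+1\}\subseteq\textsf{supp}(w)$. (a) Some reduced word for $w$ has the form (a word in letters $\le k$) followed by (a word in letters $\ge k+1$) if and only if there exists $x<k+1$ such that $\{w(1),\dots,w(k)\}=[1,k+1]\setminus\{x\}$ and $w^{-1}(x)>k+1$. (b) Some reduced word for $w$ has the form (a word in letters $\ge k+1$) followed by (a word in letters $\le k$) if and only if there exists $y>k+1$ such that $\{w(k+2),\dots,w(n)\}=[k+1,n]\setminus\{y\}$ and $w^{-1}(y)<k+1$. (c) The letters $k$ and $k+1$ are interlaced in $w$ if and only if there exist $i\in[1,k]$ and $j\in[k+2,n]$ such that $w(i)>k+1$ and $w(j)<k+1$.
   Context: Permutations are written in one-line notation and composed right to left; $\sigma_i=(i,i+1)$, and reduced words are sequences of subscripts of reduced expressions. $\textsf{supp}(w)$ is the set of letters appearing in reduced words of $w$. For $k,k+1\in\textsf{supp}(w)$: they have increasing orientation in $w$ if in every reduced word all occurrences of $k$ are to the left of all occurrences of $k+1$; decreasing orientation if all occurrences of $k$ are to the right of all occurrences of $k+1$; otherwise they are interlaced. *)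

theory Defs
  imports "HOL-Combinatorics.Transposition" "HOL-Combinatorics.Permutations"
begin

text \<open>Permutations of [1,n] are functions nat => nat with w permutes {1..n}.
  The simple transposition s_i = (i,i+1). A word [a1,...,am] denotes
  s_a1 o ... o s_am (composition right to left).\<close>

definition simple_trans :: "nat \<Rightarrow> nat \<Rightarrow> nat" where
  "simple_trans i = Transposition.transpose i (Suc i)"

definition word_perm :: "nat list \<Rightarrow> nat \<Rightarrow> nat" where
  "word_perm xs = foldr (\<lambda>a f. simple_trans a \<circ> f) xs id"

definition is_word :: "nat \<Rightarrow> (nat \<Rightarrow> nat) \<Rightarrow> nat list \<Rightarrow> bool" where
  "is_word n w xs \<longleftrightarrow> (\<forall>a\<in>set xs. 1 \<le> a \<and> a < n) \<and> word_perm xs = w"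

definition reduced_word :: "nat \<Rightarrow> (nat \<Rightarrow> nat) \<Rightarrow> nat list \<Rightarrow> bool" where
  "reduced_word n w xs \<longleftrightarrow> is_word n w xs \<and> (\<forall>ys. is_word n w ys \<longrightarrow> length xs \<le> length ys)"

definition supp_perm :: "nat \<Rightarrow> (nat \<Rightarrow> nat) \<Rightarrow> nat set" where
  "supp_perm n w = {a. \<exists>xs. reduced_word n w xs \<and> a \<in> set xs}"

definition increasing_orient :: "nat \<Rightarrow> (nat \<Rightarrow> nat) \<Rightarrow> nat \<Rightarrow> bool" where
  "increasing_orient n w k \<longleftrightarrow> (\<forall>xs. reduced_word n w xs \<longrightarrow>
     (\<forall>i j. i < length xs \<and> j < length xs \<and> xs ! i = k \<and> xs ! j = Suc k \<longrightarrow> i < j))"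

definition decreasing_orient :: "nat \<Rightarrow> (nat \<Rightarrow> nat) \<Rightarrow> nat \<Rightarrow> bool" where
  "decreasing_orient n w k \<longleftrightarrow> (\<forall>xs. reduced_word n w xs \<longrightarrow>
     (\<forall>i j. i < length xs \<and> j < length xs \<and> xs ! i = k \<and> xs ! j = Suc k \<longrightarrow> j < i))"

definition interlaced :: "nat \<Rightarrow> (nat \<Rightarrow> nat) \<Rightarrow> nat \<Rightarrow> bool" where
  "interlaced n w k \<longleftrightarrow> k \<in> supp_perm n w \<and> Suc k \<in> supp_perm n w \<and>
     \<not> increasing_orient n w k \<and> \<not> decreasing_orient n w k"

end

theory Submission
  imports Defs
begin

(*
  Reduced words of w have length equal to the number of inversions of w, and the letter i
  occurs in one (equivalently, every) reduced word of w iff w does not map {1..i} onto itself.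

  (a) A reduced word u v with u in letters <= k and v in letters >= k+1 is a length-additive
  factorisation w = U V with U permuting [1,k+1] and V permuting [k+1,n]. Then w[1,k] = U[1,k]
  misses exactly x = U(k+1), and w^-1(x) = V^-1(k+1) > k+1 because k+1 occurs in v.
  Conversely U is determined by w on [1,k] and U(k+1) = x, and w^-1(x) > k+1 is exactly what
  keeps every inversion of U an inversion of U V, so that lengths add up.

  (c) Some reduced word has k+1 before k iff w(i) > k+1 for some i <= k. Peeling off left
  descents preserves such an i until the descent k+1 appears, after which k must still occur.
  Conversely, an innermost occurrence k+1 ... k in a reduced word produces such a value for
  the suffix starting there, and it propagates to w along the reduced word.

  (b) and the decreasing half of (c) follow by conjugating with the longest element
  w0 = (i |-> n+1-i), which turns reduced words of w into reduced words of w0 w w0 via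
  a |-> n-a.
*)

section \<open>Words and inversions\<close>

lemma simple_trans_apply:
  "simple_trans a x = (if x = a then Suc a else if x = Suc a then a else x)"
  by (simp add: simple_trans_def transpose_def)

lemma simple_trans_simple_trans [simp]: "simple_trans a (simple_trans a x) = x"
  by (simp add: simple_trans_apply)

lemma simple_trans_less_iff:
  "simple_trans a y < simple_trans a x \<longleftrightarrow>
     (y < x \<and> \<not> (y = a \<and> x = Suc a)) \<or> (x = a \<and> y = Suc a)"
  by (auto simp: simple_trans_apply)

lemma word_perm_Nil [simp]: "word_perm [] = id"
  by (simp add: word_perm_def)

lemma word_perm_Cons [simp]: "word_perm (a # xs) = simple_trans a \<circ> word_perm xs"
  by (simp add: word_perm_def)

lemma word_perm_append: "word_perm (xs @ ys) = word_perm xs \<circ> word_perm ys"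
  by (induction xs) auto

lemma word_perm_permutes:
  assumes "\<forall>a\<in>set xs. l \<le> a \<and> a < r"
  shows "word_perm xs permutes {l..r}"
  using assms
proof (induction xs)
  case (Cons a xs)
  have "simple_trans a permutes {l..r}"
    unfolding simple_trans_def using Cons.prems by (intro permutes_swap_id) auto
  moreover have "word_perm xs permutes {l..r}"
    using Cons by simp
  ultimately show ?case
    unfolding word_perm_Cons by (rule permutes_compose[rotated])
qed simp

lemma simple_trans_comp_permutes:
  "f permutes {1..n} \<Longrightarrow> 1 \<le> a \<Longrightarrow> a < n \<Longrightarrow> simple_trans a \<circ> f permutes {1..n}"
  unfolding simple_trans_def by (intro permutes_compose permutes_swap_id) auto

lemma word_perm_fixes_Suc:
  "\<forall>a\<in>set xs. a \<noteq> k \<and> a \<noteq> Suc k \<Longrightarrow> word_perm xs (Suc k) = Suc k"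
  by (induction xs) (auto simp: simple_trans_apply)

lemma word_perm_image_initial_segment:
  "\<forall>a\<in>set xs. 1 \<le> a \<Longrightarrow> i \<notin> set xs \<Longrightarrow> word_perm xs ` {1..i} = {1..i}"
proof (induction xs)
  case (Cons a xs)
  then have "simple_trans a ` {1..i} = {1..i}"
    unfolding simple_trans_def by (intro transpose_image_eq) auto
  moreover have "word_perm (a # xs) ` {1..i} = simple_trans a ` word_perm xs ` {1..i}"
    by (simp add: image_image)
  ultimately show ?case
    using Cons by simp
qed simp

lemma is_word_permutes: "is_word n w xs \<Longrightarrow> w permutes {1..n}"
  unfolding is_word_def using word_perm_permutes by blast

lemma reduced_word_permutes: "reduced_word n w xs \<Longrightarrow> w permutes {1..n}"
  unfolding reduced_word_def using is_word_permutes by blast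

definition inversions :: "nat \<Rightarrow> (nat \<Rightarrow> nat) \<Rightarrow> (nat \<times> nat) set" where
  "inversions n f = {(p, q). 1 \<le> p \<and> p < q \<and> q \<le> n \<and> f q < f p}"

lemma finite_inversions [simp]: "finite (inversions n f)"
  by (rule finite_subset[of _ "{1..n} \<times> {1..n}"]) (auto simp: inversions_def)

lemma inversions_id [simp]: "inversions n id = {}"
  by (auto simp: inversions_def)

lemma inversions_simple_trans_ascent:
  assumes f: "f permutes {1..n}" and p: "f p = a" and q: "f q = Suc a" and "p < q"
    and a: "1 \<le> a" "a < n"
  shows "inversions n (simple_trans a \<circ> f) = insert (p, q) (inversions n f)"
    and "(p, q) \<notin> inversions n f"
proof -
  have "p \<in> {1..n}" "q \<in> {1..n}"
    using a p q permutes_in_image[OF f, of p] permutes_in_image[OF f, of q] by auto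
  moreover have "f r = a \<longleftrightarrow> r = p" "f r = Suc a \<longleftrightarrow> r = q" for r
    using p q permutes_inj[OF f] by (metis injD)+
  ultimately show "inversions n (simple_trans a \<circ> f) = insert (p, q) (inversions n f)"
    using \<open>p < q\<close> unfolding inversions_def by (auto simp: simple_trans_less_iff)
  show "(p, q) \<notin> inversions n f"
    using p q by (simp add: inversions_def)
qed

lemma inversions_simple_trans_descent:
  assumes f: "f permutes {1..n}" and p: "f p = a" and q: "f q = Suc a" and "q < p"
    and a: "1 \<le> a" "a < n"
  shows "inversions n (simple_trans a \<circ> f) = inversions n f - {(q, p)}"
    and "(q, p) \<in> inversions n f"
proof -
  let ?g = "simple_trans a \<circ> f"
  have g: "?g permutes {1..n}"
    using simple_trans_comp_permutes[OF f a] .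
  have "?g q = a" "?g p = Suc a"
    using p q by (simp_all add: simple_trans_apply)
  moreover have "simple_trans a \<circ> ?g = f"
    by (simp add: fun_eq_iff)
  ultimately have "inversions n f = insert (q, p) (inversions n ?g)" "(q, p) \<notin> inversions n ?g"
    using inversions_simple_trans_ascent[OF g _ _ \<open>q < p\<close> a] by simp_all
  then show "inversions n ?g = inversions n f - {(q, p)}" and "(q, p) \<in> inversions n f"
    by auto
qed

lemma card_inversions_simple_trans_le:
  assumes f: "f permutes {1..n}" and a: "1 \<le> a" "a < n"
  shows "card (inversions n (simple_trans a \<circ> f)) \<le> Suc (card (inversions n f))"
proof -
  define p q where "p = inv f a" and "q = inv f (Suc a)"
  have fp: "f p = a" and fq: "f q = Suc a"
    unfolding p_def q_def by (simp_all add: permutes_inverses[OF f])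
  then have "p < q \<or> q < p"
    by (metis n_not_Suc_n linorder_neqE_nat)
  then show ?thesis
  proof
    assume "p < q"
    then show ?thesis
      using inversions_simple_trans_ascent[OF f fp fq _ a] by simp
  next
    assume "q < p"
    then show ?thesis
      using inversions_simple_trans_descent[OF f fp fq _ a] by (simp add: card_Diff1_le le_SucI)
  qed
qed

lemma card_inversions_left_descent:
  assumes w: "w permutes {1..n}" and a: "1 \<le> a" "a < n" and "inv w (Suc a) < inv w a"
  shows "Suc (card (inversions n (simple_trans a \<circ> w))) = card (inversions n w)"
proof -
  have "inversions n (simple_trans a \<circ> w) = inversions n w - {(inv w (Suc a), inv w a)}"
    and "(inv w (Suc a), inv w a) \<in> inversions n w"
    using inversions_simple_trans_descent[OF w _ _ assms(4) a] permutes_inverses[OF w] by simp_all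
  then show ?thesis
    by (simp only:) (rule card_Suc_Diff1[OF finite_inversions])
qed

lemma card_inversions_word_perm_le:
  "\<forall>a\<in>set xs. 1 \<le> a \<and> a < n \<Longrightarrow> card (inversions n (word_perm xs)) \<le> length xs"
proof (induction xs)
  case (Cons a xs)
  then have perm: "word_perm xs permutes {1..n}" and a: "1 \<le> a" "a < n"
    and "card (inversions n (word_perm xs)) \<le> length xs"
    by (simp_all add: word_perm_permutes)
  then show ?case
    using card_inversions_simple_trans_le[OF perm a]
    by (simp only: word_perm_Cons length_Cons)
qed simp

lemma inversions_empty_imp_id:
  assumes w: "w permutes {1..n}" and "inversions n w = {}"
  shows "w = id"
proof (rule ccontr)
  assume "w \<noteq> id"
  then have ex: "\<exists>x. w x \<noteq> x"
    by auto
  define x where "x = (LEAST x. w x \<noteq> x)"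
  have wx: "w x \<noteq> x"
    unfolding x_def by (rule LeastI_ex[OF ex])
  have below: "w y = y" if "y < x" for y
    using that not_less_Least unfolding x_def by blast
  have "x \<in> {1..n}"
    using wx permutes_not_in[OF w] by blast
  define q where "q = inv w x"
  have wq: "w q = x"
    unfolding q_def by (rule permutes_inverses(1)[OF w])
  have q: "q \<in> {1..n}"
    unfolding q_def using \<open>x \<in> {1..n}\<close> permutes_in_image[OF permutes_inv[OF w]] by blast
  have "x < q"
  proof (rule ccontr)
    assume "\<not> x < q"
    then have "w q = q"
      using wx wq below[of q] by (cases "q = x") auto
    with wq wx show False
      by simp
  qed
  moreover have "x < w x"
  proof (rule ccontr)
    assume "\<not> x < w x"
    then have "w (w x) = w x"
      using wx below[of "w x"] by simp
    with wx show False
      by (simp add: inj_eq[OF permutes_inj[OF w]])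
  qed
  ultimately have "(x, q) \<in> inversions n w"
    using \<open>x \<in> {1..n}\<close> q wq by (auto simp: inversions_def)
  with assms show False
    by simp
qed

lemma exists_descent_step:
  fixes h :: "nat \<Rightarrow> nat"
  assumes "b < c" and "h c < h b"
  shows "\<exists>a. b \<le> a \<and> a < c \<and> h (Suc a) < h a"
  using assms
proof (induction c)
  case (Suc c)
  show ?case
  proof (cases "h (Suc c) < h c")
    case True
    with Suc.prems show ?thesis
      by (auto simp: less_Suc_eq_le)
  next
    case False
    with Suc.prems have "b < c" "h c < h b"
      by (auto simp: less_Suc_eq)
    then obtain a where "b \<le> a" "a < c" "h (Suc a) < h a"
      using Suc.IH by blast
    then show ?thesis
      by (intro exI[of _ a]) simp
  qed
qed simp

lemma exists_left_descent:
  assumes w: "w permutes {1..n}" and "w \<noteq> id"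
  shows "\<exists>a. 1 \<le> a \<and> a < n \<and> inv w (Suc a) < inv w a"
proof -
  have "inversions n w \<noteq> {}"
    using inversions_empty_imp_id[OF w] assms(2) by blast
  then obtain p q where pq: "1 \<le> p" "p < q" "q \<le> n" "w q < w p"
    unfolding inversions_def by blast
  moreover have "inv w (w p) < inv w (w q)"
    using pq(2) by (simp add: permutes_inverses[OF w])
  ultimately obtain a where a: "w q \<le> a" "a < w p" "inv w (Suc a) < inv w a"
    using exists_descent_step[of "w q" "w p" "inv w"] by blast
  have "w p \<le> n" "1 \<le> w q"
    using pq permutes_in_image[OF w, of p] permutes_in_image[OF w, of q] by simp_all
  with a show ?thesis
    by (intro exI[of _ a]) simp
qed

section \<open>Reduced words\<close>

lemma exists_word_card_inversions:
  "w permutes {1..n} \<Longrightarrow> \<exists>xs. is_word n w xs \<and> length xs = card (inversions n w)"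
proof (induction "card (inversions n w)" arbitrary: w rule: less_induct)
  case less
  show ?case
  proof (cases "w = id")
    case True
    then show ?thesis
      by (auto simp: is_word_def)
  next
    case False
    then obtain a where a: "1 \<le> a" "a < n" "inv w (Suc a) < inv w a"
      using exists_left_descent[OF less.prems] by blast
    note card_w = card_inversions_left_descent[OF less.prems a]
    obtain xs where "is_word n (simple_trans a \<circ> w) xs"
      and "length xs = card (inversions n (simple_trans a \<circ> w))"
      using less.hyps[of "simple_trans a \<circ> w"] card_w simple_trans_comp_permutes[OF less.prems a(1,2)]
      by auto
    with a card_w show ?thesis
      by (intro exI[of _ "a # xs"]) (auto simp: is_word_def fun_eq_iff)
  qed
qed

lemma reduced_word_iff_card_inversions:
  "reduced_word n w xs \<longleftrightarrow> is_word n w xs \<and> length xs = card (inversions n w)"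
proof
  assume red: "reduced_word n w xs"
  then have "is_word n w xs"
    by (simp add: reduced_word_def)
  moreover obtain ys where "is_word n w ys" "length ys = card (inversions n w)"
    using exists_word_card_inversions[OF is_word_permutes[OF \<open>is_word n w xs\<close>]] by blast
  ultimately show "is_word n w xs \<and> length xs = card (inversions n w)"
    using red card_inversions_word_perm_le[of xs n] by (force simp: reduced_word_def is_word_def)
next
  assume "is_word n w xs \<and> length xs = card (inversions n w)"
  moreover have "card (inversions n w) \<le> length ys" if "is_word n w ys" for ys
    using that card_inversions_word_perm_le[of ys n] by (auto simp: is_word_def)
  ultimately show "reduced_word n w xs"
    by (simp add: reduced_word_def)
qed

lemma exists_reduced_word: "w permutes {1..n} \<Longrightarrow> \<exists>xs. reduced_word n w xs"
  using exists_word_card_inversions reduced_word_iff_card_inversions by blast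

lemma reduced_word_Cons_left_descent:
  assumes "reduced_word n (simple_trans a \<circ> w) xs" and w: "w permutes {1..n}"
    and a: "1 \<le> a" "a < n" "inv w (Suc a) < inv w a"
  shows "reduced_word n w (a # xs)"
  using assms card_inversions_left_descent[OF w a]
  by (auto simp: reduced_word_iff_card_inversions is_word_def fun_eq_iff)

lemma reduced_word_appendD:
  assumes "reduced_word n w (ys @ zs)"
  shows "reduced_word n (word_perm ys) ys" and "reduced_word n (word_perm zs) zs"
proof -
  have letters: "\<forall>a\<in>set (ys @ zs). 1 \<le> a \<and> a < n" and w: "w = word_perm ys \<circ> word_perm zs"
    and min: "\<And>xs. is_word n w xs \<Longrightarrow> length (ys @ zs) \<le> length xs"
    using assms by (auto simp: reduced_word_def is_word_def word_perm_append)
  have "length ys \<le> length ys'" if "is_word n (word_perm ys) ys'" for ys'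
    using that letters min[of "ys' @ zs"] by (auto simp: is_word_def w word_perm_append)
  then show "reduced_word n (word_perm ys) ys"
    using letters by (auto simp: reduced_word_def is_word_def)
  have "length zs \<le> length zs'" if "is_word n (word_perm zs) zs'" for zs'
    using that letters min[of "ys @ zs'"] by (auto simp: is_word_def w word_perm_append)
  then show "reduced_word n (word_perm zs) zs"
    using letters by (auto simp: reduced_word_def is_word_def)
qed

lemma reduced_word_Cons_ascent:
  assumes red: "reduced_word n w (a # zs)"
    and p: "word_perm zs p = a" and q: "word_perm zs q = Suc a"
  shows "p < q"
proof (rule ccontr)
  let ?f = "word_perm zs"
  have letters: "\<forall>b\<in>set zs. 1 \<le> b \<and> b < n" and a: "1 \<le> a" "a < n"
    and w: "w = simple_trans a \<circ> ?f" and len: "length (a # zs) = card (inversions n w)"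
    using red by (auto simp: reduced_word_iff_card_inversions is_word_def)
  have f: "?f permutes {1..n}"
    using word_perm_permutes[OF letters] .
  assume "\<not> p < q"
  moreover have "p \<noteq> q"
    using p q by auto
  moreover have "inv ?f a = p" "inv ?f (Suc a) = q"
    using p q by (simp_all add: permutes_inv_eq[OF f])
  ultimately have "inv ?f (Suc a) < inv ?f a"
    by simp
  then have "Suc (card (inversions n w)) = card (inversions n ?f)"
    using card_inversions_left_descent[OF f a] w by simp
  with len card_inversions_word_perm_le[OF letters] show False
    by simp
qed

lemma inversions_Cons_subset:
  assumes red: "reduced_word n w (a # zs)"
  shows "inversions n (word_perm zs) \<subseteq> inversions n w"
proof -
  let ?f = "word_perm zs"
  have f: "?f permutes {1..n}" and a: "1 \<le> a" "a < n" and w: "w = simple_trans a \<circ> ?f"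
    using red word_perm_permutes by (auto simp: reduced_word_def is_word_def)
  have fa: "?f (inv ?f a) = a" and fa': "?f (inv ?f (Suc a)) = Suc a"
    by (simp_all add: permutes_inverses[OF f])
  then have "inv ?f a < inv ?f (Suc a)"
    by (rule reduced_word_Cons_ascent[OF red])
  then have "inversions n w = insert (inv ?f a, inv ?f (Suc a)) (inversions n ?f)"
    using inversions_simple_trans_ascent(1)[OF f fa fa' _ a] w by simp
  then show ?thesis
    by blast
qed

lemma inversions_suffix_subset:
  "reduced_word n w (ys @ zs) \<Longrightarrow> inversions n (word_perm zs) \<subseteq> inversions n w"
proof (induction ys arbitrary: w)
  case Nil
  then show ?case
    by (simp add: reduced_word_def is_word_def)
next
  case (Cons a ys)
  then have "reduced_word n (word_perm (ys @ zs)) (ys @ zs)"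
    using reduced_word_appendD(2)[of n w "[a]"] by simp
  with Cons show ?case
    using inversions_Cons_subset[of n w a "ys @ zs"] by auto
qed

lemma crossing_inversion_imp_moves:
  assumes w: "w permutes {1..n}" and pq: "(p, q) \<in> inversions n w" and "p \<le> i" and "i < q"
  shows "w ` {1..i} \<noteq> {1..i}"
proof
  assume wi: "w ` {1..i} = {1..i}"
  have "p \<in> {1..i}" "q \<notin> {1..i}" "q \<in> {1..n}" "w q < w p"
    using pq \<open>p \<le> i\<close> \<open>i < q\<close> by (auto simp: inversions_def)
  then have "w p \<in> w ` {1..i}" "w q \<notin> w ` {1..i}"
    by (simp_all add: inj_image_mem_iff[OF permutes_inj[OF w]])
  then have "w p \<in> {1..i}" "w q \<notin> {1..i}"
    unfolding wi .
  moreover have "w q \<in> {1..n}"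
    using \<open>q \<in> {1..n}\<close> permutes_in_image[OF w, of q] by simp
  ultimately show False
    using \<open>w q < w p\<close> by auto
qed

lemma letter_in_reduced_word_iff:
  assumes red: "reduced_word n w xs" and "1 \<le> i"
  shows "i \<in> set xs \<longleftrightarrow> w ` {1..i} \<noteq> {1..i}"
proof
  assume "w ` {1..i} \<noteq> {1..i}"
  then show "i \<in> set xs"
    using red word_perm_image_initial_segment[of xs i] by (auto simp: reduced_word_def is_word_def)
next
  assume "i \<in> set xs"
  then obtain ys zs where xs: "xs = ys @ i # zs" and "i \<notin> set zs"
    by (meson split_list_last)
  let ?f = "word_perm zs"
  have letters: "\<forall>a\<in>set zs. 1 \<le> a \<and> a < n" "i < n"
    using red xs by (auto simp: reduced_word_def is_word_def)
  have f: "?f permutes {1..n}" and f_i: "?f ` {1..i} = {1..i}"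
    using word_perm_permutes[OF letters(1)] word_perm_image_initial_segment[of zs i] letters(1)
      \<open>i \<notin> set zs\<close> by auto
  \<comment> \<open>the last \<open>i\<close> creates an inversion across \<open>i\<close>, and inversions of reduced suffixes persist\<close>
  define p q where "p = inv ?f i" and "q = inv ?f (Suc i)"
  have fp: "?f p = i" and fq: "?f q = Suc i"
    unfolding p_def q_def by (simp_all add: permutes_inverses[OF f])
  have "?f p \<in> ?f ` {1..i}" "?f q \<notin> ?f ` {1..i}"
    using fp fq f_i \<open>1 \<le> i\<close> by auto
  then have "p \<in> {1..i}" "q \<notin> {1..i}"
    by (simp_all add: inj_image_mem_iff[OF permutes_inj[OF f]])
  moreover have "q \<in> {1..n}"
    using fq letters(2) permutes_in_image[OF f, of q] by simp
  ultimately have "(p, q) \<in> inversions n (word_perm (i # zs))"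
    using inversions_simple_trans_ascent[OF f fp fq _ \<open>1 \<le> i\<close> letters(2)] by auto
  also have "\<dots> \<subseteq> inversions n w"
    using inversions_suffix_subset[of n w ys "i # zs"] red xs by simp
  finally show "w ` {1..i} \<noteq> {1..i}"
    using crossing_inversion_imp_moves[OF reduced_word_permutes[OF red]] \<open>p \<in> {1..i}\<close> \<open>q \<notin> {1..i}\<close>
      \<open>q \<in> {1..n}\<close> by auto
qed

lemma supp_perm_bounds:
  assumes "k \<in> supp_perm n w"
  shows "1 \<le> k" and "k < n"
  using assms by (auto simp: supp_perm_def reduced_word_def is_word_def)

lemma supp_perm_in_reduced_word:
  assumes "k \<in> supp_perm n w" and "reduced_word n w xs"
  shows "k \<in> set xs"
proof -
  obtain ys where "reduced_word n w ys" "k \<in> set ys"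
    using assms(1) by (auto simp: supp_perm_def)
  with assms(2) supp_perm_bounds[OF assms(1)] show ?thesis
    using letter_in_reduced_word_iff by blast
qed

lemma reduced_word_letters_interval:
  assumes w: "w permutes {l..r}" and "1 \<le> l" and red: "reduced_word n w xs" and "a \<in> set xs"
  shows "l \<le> a \<and> a < r"
proof -
  have "1 \<le> a" and moved: "w ` {1..a} \<noteq> {1..a}"
    using red \<open>a \<in> set xs\<close> letter_in_reduced_word_iff[OF red] by (auto simp: reduced_word_def is_word_def)
  have "\<not> a < l"
  proof
    assume "a < l"
    then have "w ` {1..a} = id ` {1..a}"
      using permutes_not_in[OF w] by (intro image_cong) auto
    with moved show False
      by simp
  qed
  moreover have "\<not> r \<le> a"
  proof
    assume "r \<le> a"
    then have "w permutes {1..a}"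
      using permutes_subset[OF w] \<open>1 \<le> l\<close> by auto
    with moved show False
      using permutes_image by blast
  qed
  ultimately show ?thesis
    by simp
qed

section \<open>Length-additive factorisations\<close>

lemma inversions_comp_ordered:
  assumes Up: "U permutes {1..n}" and Vp: "V permutes {1..n}"
    and ordered: "\<And>a b. (a, b) \<in> inversions n U \<Longrightarrow> inv V a < inv V b"
  shows "map_prod (inv V) (inv V) ` inversions n U \<subseteq> inversions n (U \<circ> V) - inversions n V"
    and "inversions n V \<subseteq> inversions n (U \<circ> V)"
proof -
  show "map_prod (inv V) (inv V) ` inversions n U \<subseteq> inversions n (U \<circ> V) - inversions n V"
  proof
    fix x assume "x \<in> map_prod (inv V) (inv V) ` inversions n U"
    then obtain a b where ab: "(a, b) \<in> inversions n U" and x: "x = (inv V a, inv V b)"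
      by auto
    then have "a \<in> {1..n}" "b \<in> {1..n}" "a < b" "U b < U a"
      by (auto simp: inversions_def)
    moreover have "inv V a \<in> {1..n} \<longleftrightarrow> a \<in> {1..n}" "inv V b \<in> {1..n} \<longleftrightarrow> b \<in> {1..n}"
      by (rule permutes_in_image[OF permutes_inv[OF Vp]])+
    ultimately show "x \<in> inversions n (U \<circ> V) - inversions n V"
      using ordered[OF ab] unfolding x by (simp add: inversions_def permutes_inverses[OF Vp])
  qed
  show "inversions n V \<subseteq> inversions n (U \<circ> V)"
  proof
    fix x assume x: "x \<in> inversions n V"
    then obtain p q where pq: "x = (p, q)" "1 \<le> p" "p < q" "q \<le> n" "V q < V p"
      by (auto simp: inversions_def)
    have "V p \<in> {1..n}" "V q \<in> {1..n}"
      using pq permutes_in_image[OF Vp, of p] permutes_in_image[OF Vp, of q] by simp_all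
    have "\<not> U (V p) < U (V q)"
    proof
      assume "U (V p) < U (V q)"
      with \<open>V q < V p\<close> \<open>V p \<in> {1..n}\<close> \<open>V q \<in> {1..n}\<close> have "(V q, V p) \<in> inversions n U"
        by (simp add: inversions_def)
      from ordered[OF this] \<open>p < q\<close> show False
        by (simp add: permutes_inverses[OF Vp])
    qed
    moreover have "U (V p) \<noteq> U (V q)"
      using \<open>V q < V p\<close> by (simp add: inj_eq[OF permutes_inj[OF Up]])
    ultimately show "x \<in> inversions n (U \<circ> V)"
      using pq by (simp add: inversions_def)
  qed
qed

lemma reduced_word_append_inversions:
  assumes U: "reduced_word n U u" and V: "reduced_word n V v"
    and ordered: "\<And>a b. (a, b) \<in> inversions n U \<Longrightarrow> inv V a < inv V b"
  shows "reduced_word n (U \<circ> V) (u @ v)"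
proof -
  have Up: "U permutes {1..n}" and Vp: "V permutes {1..n}"
    using U V reduced_word_permutes by blast+
  note inversions_comp_ordered[OF Up Vp ordered]
  moreover have "inj_on (map_prod (inv V) (inv V)) (inversions n U)"
    using map_prod_inj_on[OF permutes_inj[OF permutes_inv[OF Vp]] permutes_inj[OF permutes_inv[OF Vp]]]
    by (simp add: inj_on_subset[of _ UNIV])
  ultimately have "card (inversions n U) + card (inversions n V) \<le> card (inversions n (U \<circ> V))"
    by (metis card_image card_mono card_Diff_subset finite_Diff finite_inversions le_diff_conv2)
  moreover have "is_word n (U \<circ> V) (u @ v)" "length u = card (inversions n U)"
    "length v = card (inversions n V)"
    using U V by (auto simp: reduced_word_iff_card_inversions is_word_def word_perm_append)
  ultimately show ?thesis
    using card_inversions_word_perm_le[of "u @ v" n]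
    by (auto simp: reduced_word_iff_card_inversions is_word_def)
qed

lemma permutes_image_atLeastAtMost_Suc:
  assumes U: "U permutes {1..Suc k}"
  shows "U ` {1..k} = {1..Suc k} - {U (Suc k)}"
proof -
  have "{1..k} = {1..Suc k} - {Suc k}"
    by auto
  then show ?thesis
    using permutes_image[OF U] by (simp add: image_set_diff[OF permutes_inj[OF U]])
qed

lemma permutes_atLeastAtMost_moves_first:
  fixes m n :: nat
  assumes V: "V permutes {m..n}" and "m \<le> n" and moves: "V ` {1..m} \<noteq> {1..m}"
  shows "m < inv V m"
proof -
  have Vq: "V (inv V m) = m"
    by (rule permutes_inverses(1)[OF V])
  have "inv V m \<in> {m..n}"
    unfolding permutes_in_image[OF permutes_inv[OF V]] using \<open>m \<le> n\<close> by simp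
  moreover have "inv V m \<noteq> m"
  proof
    assume "inv V m = m"
    then have "V ` {1..m} = id ` {1..m}"
      using Vq permutes_not_in[OF V] by (intro image_cong) (auto simp: le_less)
    with moves show False
      by simp
  qed
  ultimately show ?thesis
    by simp
qed

lemma inversions_permutes_atMost:
  assumes U: "U permutes {1..m}" and "(a, b) \<in> inversions n U"
  shows "b \<le> m"
proof (rule ccontr)
  assume "\<not> b \<le> m"
  moreover have "1 \<le> a" "a < b" "U b < U a"
    using assms(2) by (auto simp: inversions_def)
  moreover from calculation have "U a < b"
    using permutes_not_in[OF U, of a] permutes_in_image[OF U, of a] by (cases "a \<le> m") auto
  ultimately show False
    using permutes_not_in[OF U, of b] by simp
qed

lemma exists_permutes_extending:
  assumes "w ` {1..k} = {1..Suc k} - {x}" and "x \<in> {1..Suc k}"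
  obtains U where "U permutes {1..Suc k}" and "\<And>i. i \<in> {1..k} \<Longrightarrow> U i = w i" and "U (Suc k) = x"
proof
  define U where "U i = (if i \<in> {1..k} then w i else if i = Suc k then x else i)" for i
  have "U ` {1..Suc k} = insert x (w ` {1..k})"
    unfolding U_def by (auto simp: le_Suc_eq image_iff)
  also have "\<dots> = {1..Suc k}"
    using assms by auto
  finally show "U permutes {1..Suc k}"
    using eq_card_imp_inj_on[of "{1..Suc k}" U]
    by (intro bij_imp_permutes) (auto simp: bij_betw_def U_def)
  show "U i = w i" if "i \<in> {1..k}" for i
    using that by (simp add: U_def)
  show "U (Suc k) = x"
    by (simp add: U_def)
qed

lemma reduced_word_low_high_imp:
  assumes red: "reduced_word n w (u @ v)" and u: "\<forall>a\<in>set u. a \<le> k" and v: "\<forall>a\<in>set v. Suc k \<le> a"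
    and k: "k \<in> supp_perm n w" and k': "Suc k \<in> supp_perm n w"
  shows "\<exists>x. 1 \<le> x \<and> x < Suc k \<and> w ` {1..k} = {1..Suc k} - {x} \<and> Suc k < inv w x"
proof -
  let ?U = "word_perm u" and ?V = "word_perm v"
  have w: "w = ?U \<circ> ?V" and letters: "\<forall>a\<in>set (u @ v). 1 \<le> a \<and> a < n"
    using red by (auto simp: reduced_word_def is_word_def word_perm_append)
  have redU: "reduced_word n ?U u" and redV: "reduced_word n ?V v"
    using reduced_word_appendD[OF red] .
  have U: "?U permutes {1..Suc k}" and V: "?V permutes {Suc k..n}"
    using letters u v by (auto intro!: word_perm_permutes)
  have "k \<in> set u" "Suc k \<in> set v"
    using supp_perm_in_reduced_word[OF k red] supp_perm_in_reduced_word[OF k' red] u v by auto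
  then have U_moves: "?U ` {1..k} \<noteq> {1..k}" and V_moves: "?V ` {1..Suc k} \<noteq> {1..Suc k}"
    using letter_in_reduced_word_iff[OF redU] letter_in_reduced_word_iff[OF redV]
      supp_perm_bounds[OF k] by auto
  define x where "x = ?U (Suc k)"
  have "w ` {1..k} = ?U ` {1..k}"
    unfolding w using permutes_not_in[OF V] by (intro image_cong) auto
  also have "\<dots> = {1..Suc k} - {x}"
    unfolding x_def by (rule permutes_image_atLeastAtMost_Suc[OF U])
  finally have w_image: "w ` {1..k} = {1..Suc k} - {x}" .
  have "x \<in> {1..Suc k}"
    unfolding x_def permutes_in_image[OF U] by simp
  moreover have "x \<noteq> Suc k"
  proof
    assume "x = Suc k"
    then have "?U ` {1..k} = {1..k}"
      using permutes_image_atLeastAtMost_Suc[OF U] unfolding x_def by auto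
    with U_moves show False ..
  qed
  moreover have "inv w x = inv ?V (Suc k)"
    using permutes_inv_eq[OF reduced_word_permutes[OF red]] permutes_inverses(1)[OF V]
    unfolding w x_def by simp
  moreover have "Suc k < inv ?V (Suc k)"
    using permutes_atLeastAtMost_moves_first[OF V _ V_moves] supp_perm_bounds(2)[OF k'] by simp
  ultimately show ?thesis
    using w_image by auto
qed

lemma exists_reduced_word_low_high:
  assumes w: "w permutes {1..n}" and x: "1 \<le> x" "x < Suc k"
    and w_image: "w ` {1..k} = {1..Suc k} - {x}" and x_pos: "Suc k < inv w x"
  shows "\<exists>u v. reduced_word n w (u @ v) \<and> (\<forall>a\<in>set u. a \<le> k) \<and> (\<forall>a\<in>set v. Suc k \<le> a)"
proof -
  have "inv w x \<noteq> x"
    using x x_pos by simp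
  then have "x \<in> {1..n}"
    using permutes_not_in[OF permutes_inv[OF w]] by blast
  then have "Suc k < n"
    using x_pos permutes_in_image[OF permutes_inv[OF w], of x] by simp
  obtain U where U: "U permutes {1..Suc k}" and U_w: "\<And>i. i \<in> {1..k} \<Longrightarrow> U i = w i"
    and U_x: "U (Suc k) = x"
    using exists_permutes_extending[OF w_image] x by auto
  have Up: "U permutes {1..n}"
    using permutes_subset[OF U] \<open>Suc k < n\<close> by simp
  define V where "V = inv U \<circ> w"
  have Vp: "V permutes {1..n}"
    unfolding V_def using w permutes_inv[OF Up] by (rule permutes_compose)
  have w_UV: "w = U \<circ> V"
    unfolding V_def by (simp add: fun_eq_iff permutes_inverses[OF Up])
  have V_fix: "V i = i" "inv V i = i" if "i \<in> {1..k}" for i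
    using U_w[OF that] permutes_inv_eq[OF Up] permutes_inv_eq[OF Vp] by (auto simp: V_def)
  have V: "V permutes {Suc k..n}"
    using Vp V_fix(1) by (rule permutes_superset) auto
  obtain u v where u: "reduced_word n U u" and v: "reduced_word n V v"
    using exists_reduced_word[OF Up] exists_reduced_word[OF Vp] by blast
  have "V (inv w x) = Suc k"
    using U_x permutes_inv_eq[OF Up] by (simp add: V_def permutes_inverses[OF w])
  then have inv_V: "inv V (Suc k) = inv w x"
    using permutes_inv_eq[OF Vp] by blast
  have "inv V a < inv V b" if ab: "(a, b) \<in> inversions n U" for a b
  proof -
    have "1 \<le> a" "a < b" "b \<le> Suc k"
      using ab inversions_permutes_atMost[OF U ab] by (auto simp: inversions_def)
    then show ?thesis
      using V_fix(2)[of a] V_fix(2)[of b] inv_V x_pos by (cases "b = Suc k") auto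
  qed
  then have "reduced_word n w (u @ v)"
    unfolding w_UV by (rule reduced_word_append_inversions[OF u v])
  moreover have "\<forall>a\<in>set u. a \<le> k" "\<forall>a\<in>set v. Suc k \<le> a"
    using reduced_word_letters_interval[OF U _ u] reduced_word_letters_interval[OF V _ v] by fastforce+
  ultimately show ?thesis
    by blast
qed

lemma reduced_word_low_high_iff:
  assumes "w permutes {1..n}" and "k \<in> supp_perm n w" and "Suc k \<in> supp_perm n w"
  shows "(\<exists>u v. reduced_word n w (u @ v) \<and> (\<forall>a\<in>set u. a \<le> k) \<and> (\<forall>a\<in>set v. Suc k \<le> a))
    \<longleftrightarrow> (\<exists>x. 1 \<le> x \<and> x < Suc k \<and> w ` {1..k} = {1..Suc k} - {x} \<and> Suc k < inv w x)"
proof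
  assume "\<exists>u v. reduced_word n w (u @ v) \<and> (\<forall>a\<in>set u. a \<le> k) \<and> (\<forall>a\<in>set v. Suc k \<le> a)"
  then show "\<exists>x. 1 \<le> x \<and> x < Suc k \<and> w ` {1..k} = {1..Suc k} - {x} \<and> Suc k < inv w x"
    using reduced_word_low_high_imp[OF _ _ _ assms(2,3)] by blast
next
  assume "\<exists>x. 1 \<le> x \<and> x < Suc k \<and> w ` {1..k} = {1..Suc k} - {x} \<and> Suc k < inv w x"
  then show "\<exists>u v. reduced_word n w (u @ v) \<and> (\<forall>a\<in>set u. a \<le> k) \<and> (\<forall>a\<in>set v. Suc k \<le> a)"
    using exists_reduced_word_low_high[OF assms(1)] by blast
qed

section \<open>Orientation\<close>

definition occurs_before :: "'a \<Rightarrow> 'a \<Rightarrow> 'a list \<Rightarrow> bool" where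
  "occurs_before a b xs \<longleftrightarrow> (\<exists>ys zs. xs = ys @ zs \<and> a \<in> set ys \<and> b \<in> set zs)"

lemma occurs_before_iff_nth:
  "occurs_before a b xs \<longleftrightarrow> (\<exists>i j. i < j \<and> j < length xs \<and> xs ! i = a \<and> xs ! j = b)"
proof
  assume "occurs_before a b xs"
  then obtain ys zs where "xs = ys @ zs" "a \<in> set ys" "b \<in> set zs"
    by (auto simp: occurs_before_def)
  moreover from this obtain i j where "i < length ys" "ys ! i = a" "j < length zs" "zs ! j = b"
    by (auto simp: in_set_conv_nth)
  ultimately show "\<exists>i j. i < j \<and> j < length xs \<and> xs ! i = a \<and> xs ! j = b"
    by (intro exI[of _ i] exI[of _ "length ys + j"]) (auto simp: nth_append)
next
  assume "\<exists>i j. i < j \<and> j < length xs \<and> xs ! i = a \<and> xs ! j = b"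
  then obtain i j where "i < j" "j < length xs" "xs ! i = a" "xs ! j = b"
    by blast
  then have "a \<in> set (take j xs)"
    by (auto simp: in_set_conv_nth)
  moreover have "b \<in> set (drop j xs)"
    using \<open>j < length xs\<close> \<open>xs ! j = b\<close> by (metis Cons_nth_drop_Suc list.set_intros(1))
  ultimately show "occurs_before a b xs"
    unfolding occurs_before_def by (metis append_take_drop_id)
qed

lemma occurs_before_Cons: "occurs_before a b xs \<Longrightarrow> occurs_before a b (x # xs)"
  unfolding occurs_before_def by (metis append_Cons list.set_intros(2))

lemma occurs_before_map: "occurs_before a b xs \<Longrightarrow> occurs_before (f a) (f b) (map f xs)"
  unfolding occurs_before_def by (metis image_eqI list.set_map map_append)

lemma occurs_before_innermost:
  assumes "occurs_before a b xs"
  shows "\<exists>A B C. xs = A @ a # B @ b # C \<and> a \<notin> set B \<and> b \<notin> set B"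
  using assms
proof (induction xs)
  case Nil
  then show ?case
    by (simp add: occurs_before_def)
next
  case (Cons x xs)
  show ?case
  proof (cases "occurs_before a b xs")
    case True
    then obtain A B C where "xs = A @ a # B @ b # C" "a \<notin> set B" "b \<notin> set B"
      using Cons.IH by blast
    then show ?thesis
      by (intro exI[of _ "x # A"] exI[of _ B] exI[of _ C]) simp
  next
    case False
    from Cons.prems obtain ys zs where split: "x # xs = ys @ zs" "a \<in> set ys" "b \<in> set zs"
      by (auto simp: occurs_before_def)
    then obtain ys' where ys: "ys = x # ys'"
      by (cases ys) auto
    have "a \<notin> set ys'"
      using False split ys unfolding occurs_before_def by auto
    then have "x = a"
      using split ys by simp
    have "b \<in> set xs"
      using split ys by auto
    then obtain B C where xs: "xs = B @ b # C" and "b \<notin> set B"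
      using split_list_first by metis
    moreover have "a \<notin> set B"
      using False xs unfolding occurs_before_def by fastforce
    ultimately show ?thesis
      using \<open>x = a\<close> by (intro exI[of _ "[]"] exI[of _ B] exI[of _ C]) simp
  qed
qed

lemma all_before_iff_not_occurs_before:
  assumes "a \<noteq> b"
  shows "(\<forall>i j. i < length xs \<and> j < length xs \<and> xs ! i = a \<and> xs ! j = b \<longrightarrow> i < j)
    \<longleftrightarrow> \<not> occurs_before b a xs"
proof
  assume before: "\<forall>i j. i < length xs \<and> j < length xs \<and> xs ! i = a \<and> xs ! j = b \<longrightarrow> i < j"
  show "\<not> occurs_before b a xs"
  proof
    assume "occurs_before b a xs"
    then obtain j i where "j < i" "i < length xs" "xs ! j = b" "xs ! i = a"
      by (auto simp: occurs_before_iff_nth)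
    moreover from this have "i < j"
      using before by simp
    ultimately show False
      by simp
  qed
next
  assume not_before: "\<not> occurs_before b a xs"
  show "\<forall>i j. i < length xs \<and> j < length xs \<and> xs ! i = a \<and> xs ! j = b \<longrightarrow> i < j"
  proof (intro allI impI)
    fix i j assume ij: "i < length xs \<and> j < length xs \<and> xs ! i = a \<and> xs ! j = b"
    then have "i \<noteq> j"
      using assms by auto
    moreover have "\<not> j < i"
      using ij not_before unfolding occurs_before_iff_nth by blast
    ultimately show "i < j"
      by simp
  qed
qed

lemma increasing_orient_iff_occurs_before:
  "increasing_orient n w k \<longleftrightarrow> (\<forall>xs. reduced_word n w xs \<longrightarrow> \<not> occurs_before (Suc k) k xs)"
  unfolding increasing_orient_def all_before_iff_not_occurs_before[OF n_not_Suc_n] ..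

lemma decreasing_orient_iff_occurs_before:
  "decreasing_orient n w k \<longleftrightarrow> (\<forall>xs. reduced_word n w xs \<longrightarrow> \<not> occurs_before k (Suc k) xs)"
proof -
  have "(\<forall>i j. i < length xs \<and> j < length xs \<and> xs ! i = k \<and> xs ! j = Suc k \<longrightarrow> j < i)
    \<longleftrightarrow> (\<forall>i j. i < length xs \<and> j < length xs \<and> xs ! i = Suc k \<and> xs ! j = k \<longrightarrow> i < j)" for xs
    by blast
  then show ?thesis
    unfolding decreasing_orient_def all_before_iff_not_occurs_before[OF n_not_Suc_n[symmetric]] by simp
qed

lemma reduced_word_Cons_value_above:
  assumes red: "reduced_word n w (a # zs)" and "\<exists>i\<in>{1..k}. Suc k < word_perm zs i"
  shows "\<exists>i\<in>{1..k}. Suc k < w i"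
proof -
  let ?f = "word_perm zs"
  have f: "?f permutes {1..n}" and a: "a < n" and w: "w = simple_trans a \<circ> ?f"
    using red word_perm_permutes by (auto simp: reduced_word_def is_word_def)
  obtain i where i: "i \<in> {1..k}" "Suc k < ?f i"
    using assms(2) by blast
  show ?thesis
  proof (cases "a = Suc k \<and> ?f i = Suc (Suc k)")
    case False
    with i have "Suc k < w i"
      unfolding w by (auto simp: simple_trans_apply)
    with i show ?thesis
      by blast
  next
    case True
    \<comment> \<open>\<open>simple_trans (Suc k)\<close> lowers the value \<open>k + 2\<close> at \<open>i\<close>, but raises \<open>k + 1\<close>, which sits further left\<close>
    define p where "p = inv ?f (Suc k)"
    have fp: "?f p = a"
      unfolding p_def using True by (simp add: permutes_inverses[OF f])
    have "p \<in> {1..n}"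
      unfolding p_def permutes_in_image[OF permutes_inv[OF f]] using True a by simp
    moreover have "p < i"
      using reduced_word_Cons_ascent[OF red fp] True by simp
    ultimately have "p \<in> {1..k}"
      using i by simp
    moreover have "w p = Suc (Suc k)"
      using fp True unfolding w by (simp add: simple_trans_apply)
    ultimately show ?thesis
      by (intro bexI[of _ p]) simp_all
  qed
qed

lemma reduced_word_append_value_above:
  "reduced_word n w (ys @ zs) \<Longrightarrow> \<exists>i\<in>{1..k}. Suc k < word_perm zs i \<Longrightarrow> \<exists>i\<in>{1..k}. Suc k < w i"
proof (induction ys arbitrary: w)
  case Nil
  then show ?case
    by (simp add: reduced_word_def is_word_def)
next
  case (Cons a ys)
  then have "reduced_word n (word_perm (ys @ zs)) (ys @ zs)"
    using reduced_word_appendD(2)[of n w "[a]"] by simp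
  with Cons show ?case
    using reduced_word_Cons_value_above[of n w a "ys @ zs" k] by simp
qed

lemma exists_value_above:
  assumes g: "g permutes {1..n}" and "Suc k < n" and "1 \<le> k"
    and k: "k < inv g k" and k': "k < inv g (Suc k)"
  shows "\<exists>i\<in>{1..k}. Suc k < g i"
proof (rule ccontr)
  assume below: "\<not> (\<exists>i\<in>{1..k}. Suc k < g i)"
  have "g i \<in> {1..<k}" if i: "i \<in> {1..k}" for i
  proof -
    have "inv g (g i) = i"
      by (rule permutes_inverses(2)[OF g])
    then have "g i \<noteq> k" "g i \<noteq> Suc k"
      using i k k' by auto
    moreover have "g i \<in> {1..n}"
      unfolding permutes_in_image[OF g] using i \<open>Suc k < n\<close> by simp
    moreover have "g i \<le> Suc k"
      using below i by (simp add: not_less)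
    ultimately show ?thesis
      by simp
  qed
  then have "card (g ` {1..k}) \<le> card {1..<k}"
    by (intro card_mono) auto
  moreover have "card (g ` {1..k}) = k"
    using card_image[OF permutes_inj_on[OF g]] by simp
  ultimately show False
    using \<open>1 \<le> k\<close> by simp
qed

lemma reduced_word_succ_before_value_above:
  assumes red: "reduced_word n w (Suc k # B @ k # C)" and B: "k \<notin> set B" "Suc k \<notin> set B"
    and "1 \<le> k"
  shows "\<exists>i\<in>{1..k}. Suc k < w i"
proof -
  let ?g = "word_perm C"
  have red_C: "reduced_word n (word_perm (k # C)) (k # C)"
    using reduced_word_appendD(2)[of n w "Suc k # B" "k # C"] red by simp
  have g: "?g permutes {1..n}" and "Suc k < n"
    using red word_perm_permutes[of C 1 n] by (auto simp: reduced_word_def is_word_def)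
  have w: "w = simple_trans (Suc k) \<circ> word_perm B \<circ> simple_trans k \<circ> ?g"
    using red by (simp add: reduced_word_def is_word_def word_perm_append comp_assoc)
  define p q where "p = inv ?g k" and "q = inv ?g (Suc k)"
  have gp: "?g p = k" and gq: "?g q = Suc k"
    unfolding p_def q_def by (simp_all add: permutes_inverses[OF g])
  have "p < q"
    using reduced_word_Cons_ascent[OF red_C gp gq] .
  have "p \<in> {1..n}"
    unfolding p_def permutes_in_image[OF permutes_inv[OF g]] using \<open>1 \<le> k\<close> \<open>Suc k < n\<close> by simp
  have "word_perm B (Suc k) = Suc k"
    using B by (intro word_perm_fixes_Suc) auto
  then have "w p = Suc (Suc k)"
    using gp unfolding w by (simp add: simple_trans_apply)
  show ?thesis
  proof (cases "p \<le> k")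
    case True
    with \<open>p \<in> {1..n}\<close> \<open>w p = Suc (Suc k)\<close> show ?thesis
      by (intro bexI[of _ p]) simp_all
  next
    case False
    with \<open>p < q\<close> have "\<exists>i\<in>{1..k}. Suc k < ?g i"
      using exists_value_above[OF g \<open>Suc k < n\<close> \<open>1 \<le> k\<close>] unfolding p_def q_def by simp
    then show ?thesis
      using reduced_word_append_value_above[of n w "Suc k # B @ [k]" C k] red by simp
  qed
qed

lemma exists_reduced_word_succ_before:
  assumes "w permutes {1..n}" and "1 \<le> k" and "\<exists>i\<in>{1..k}. Suc k < w i"
  shows "\<exists>xs. reduced_word n w xs \<and> occurs_before (Suc k) k xs"
  using assms
proof (induction "card (inversions n w)" arbitrary: w rule: less_induct)
  case less
  obtain i where i: "i \<in> {1..k}" "Suc k < w i"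
    using less.prems(3) by blast
  then have "w \<noteq> id"
    by auto
  then obtain a where a: "1 \<le> a" "a < n" "inv w (Suc a) < inv w a"
    using exists_left_descent[OF less.prems(1)] by blast
  let ?w' = "simple_trans a \<circ> w"
  have w': "?w' permutes {1..n}"
    using simple_trans_comp_permutes[OF less.prems(1) a(1,2)] .
  show ?case
  proof (cases "a = Suc k")
    case False
    with i have "Suc k < ?w' i"
      by (auto simp: simple_trans_apply)
    with i have "\<exists>i\<in>{1..k}. Suc k < ?w' i"
      by blast
    moreover have "card (inversions n ?w') < card (inversions n w)"
      using card_inversions_left_descent[OF less.prems(1) a] by simp
    ultimately obtain xs where xs: "reduced_word n ?w' xs" "occurs_before (Suc k) k xs"
      using less.hyps[OF _ w' less.prems(2)] by blast
    show ?thesis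
      using reduced_word_Cons_left_descent[OF xs(1) less.prems(1) a] occurs_before_Cons[OF xs(2)]
      by blast
  next
    case True
    with i have "k < ?w' i"
      by (auto simp: simple_trans_apply)
    have "?w' ` {1..k} \<noteq> {1..k}"
    proof
      assume "?w' ` {1..k} = {1..k}"
      with imageI[OF i(1), of ?w'] \<open>k < ?w' i\<close> show False
        by simp
    qed
    obtain xs where xs: "reduced_word n ?w' xs"
      using exists_reduced_word[OF w'] by blast
    then have "k \<in> set xs"
      using letter_in_reduced_word_iff[OF xs less.prems(2)] \<open>?w' ` {1..k} \<noteq> {1..k}\<close> by blast
    then have "occurs_before (Suc k) k (a # xs)"
      unfolding occurs_before_def True by (intro exI[of _ "[Suc k]"] exI[of _ xs]) simp
    with reduced_word_Cons_left_descent[OF xs less.prems(1) a] show ?thesis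
      by blast
  qed
qed

lemma increasing_orient_iff:
  assumes w: "w permutes {1..n}" and "1 \<le> k"
  shows "increasing_orient n w k \<longleftrightarrow> (\<forall>i\<in>{1..k}. w i \<le> Suc k)"
proof
  assume increasing: "increasing_orient n w k"
  show "\<forall>i\<in>{1..k}. w i \<le> Suc k"
  proof (rule ccontr)
    assume "\<not> (\<forall>i\<in>{1..k}. w i \<le> Suc k)"
    then have "\<exists>i\<in>{1..k}. Suc k < w i"
      by (simp add: not_le)
    then obtain xs where "reduced_word n w xs" "occurs_before (Suc k) k xs"
      using exists_reduced_word_succ_before[OF w \<open>1 \<le> k\<close>] by blast
    with increasing show False
      unfolding increasing_orient_iff_occurs_before by blast
  qed
next
  assume bound: "\<forall>i\<in>{1..k}. w i \<le> Suc k"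
  have "\<not> occurs_before (Suc k) k xs" if red: "reduced_word n w xs" for xs
  proof
    assume "occurs_before (Suc k) k xs"
    then obtain A B C where xs: "xs = A @ Suc k # B @ k # C" and B: "k \<notin> set B" "Suc k \<notin> set B"
      by (meson occurs_before_innermost)
    have red': "reduced_word n w (A @ Suc k # B @ k # C)"
      using red xs by simp
    then have "reduced_word n (word_perm (Suc k # B @ k # C)) (Suc k # B @ k # C)"
      by (rule reduced_word_appendD(2))
    then have "\<exists>i\<in>{1..k}. Suc k < word_perm (Suc k # B @ k # C) i"
      using B \<open>1 \<le> k\<close> by (rule reduced_word_succ_before_value_above)
    with red' obtain i where "i \<in> {1..k}" "Suc k < w i"
      using reduced_word_append_value_above by blast
    with bound show False
      by fastforce
  qed
  then show "increasing_orient n w k"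
    unfolding increasing_orient_iff_occurs_before by blast
qed

section \<open>Conjugation by the longest element\<close>

definition w0 :: "nat \<Rightarrow> nat \<Rightarrow> nat" where
  "w0 n i = (if i \<in> {1..n} then Suc n - i else i)"

lemma w0_w0 [simp]: "w0 n (w0 n i) = i"
  by (auto simp: w0_def)

lemma w0_permutes: "w0 n permutes {1..n}"
  unfolding permutes_def
proof (intro conjI allI impI)
  fix y
  show "\<exists>!x. w0 n x = y"
    by (rule ex1I[of _ "w0 n y"]) (simp, metis w0_w0)
qed (auto simp: w0_def)

lemma w0_conj_permutes: "w permutes {1..n} \<Longrightarrow> w0 n \<circ> w \<circ> w0 n permutes {1..n}"
  using w0_permutes by (blast intro: permutes_compose)

lemma w0_conj_w0_conj [simp]: "w0 n \<circ> (w0 n \<circ> w \<circ> w0 n) \<circ> w0 n = w"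
  by (simp add: fun_eq_iff)

lemma inv_w0_conj:
  assumes "w permutes {1..n}"
  shows "inv (w0 n \<circ> w \<circ> w0 n) x = w0 n (inv w (w0 n x))"
  by (simp add: permutes_inv_eq[OF w0_conj_permutes[OF assms]] permutes_inverses[OF assms])

lemma w0_image_atLeastAtMost:
  assumes "1 \<le> a" and "b \<le> n"
  shows "w0 n ` {a..b} = {Suc n - b..Suc n - a}"
proof (intro equalityI subsetI)
  fix j assume "j \<in> w0 n ` {a..b}"
  with assms show "j \<in> {Suc n - b..Suc n - a}"
    by (auto simp: w0_def)
next
  fix j assume "j \<in> {Suc n - b..Suc n - a}"
  with assms have "w0 n j \<in> {a..b}"
    by (auto simp: w0_def)
  then show "j \<in> w0 n ` {a..b}"
    by (rule rev_image_eqI) simp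
qed

lemma simple_trans_w0_conj:
  "1 \<le> a \<Longrightarrow> a < n \<Longrightarrow> simple_trans (n - a) x = w0 n (simple_trans a (w0 n x))"
  by (auto simp: w0_def simple_trans_apply)

lemma word_perm_map_w0:
  "\<forall>a\<in>set xs. 1 \<le> a \<and> a < n \<Longrightarrow> word_perm (map (\<lambda>a. n - a) xs) = w0 n \<circ> word_perm xs \<circ> w0 n"
  by (induction xs) (auto simp: fun_eq_iff simple_trans_w0_conj)

lemma is_word_w0_conj:
  assumes "is_word n w xs"
  shows "is_word n (w0 n \<circ> w \<circ> w0 n) (map (\<lambda>a. n - a) xs)"
  using assms word_perm_map_w0[of xs n] by (auto simp: is_word_def)

lemma map_diff_map_diff:
  fixes n :: nat
  shows "\<forall>a\<in>set xs. a \<le> n \<Longrightarrow> map (\<lambda>a. n - a) (map (\<lambda>a. n - a) xs) = xs"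
  by (induction xs) auto

lemma reduced_word_w0_conj_iff:
  "reduced_word n (w0 n \<circ> w \<circ> w0 n) ys \<longleftrightarrow> (\<exists>xs. ys = map (\<lambda>a. n - a) xs \<and> reduced_word n w xs)"
proof -
  have conj: "reduced_word n (w0 n \<circ> v \<circ> w0 n) (map (\<lambda>a. n - a) zs)"
    if "reduced_word n v zs" for v zs
  proof -
    have "length zs \<le> length zs'" if "is_word n (w0 n \<circ> v \<circ> w0 n) zs'" for zs'
      using is_word_w0_conj[OF that] \<open>reduced_word n v zs\<close> by (auto simp: reduced_word_def)
    with that show ?thesis
      by (auto simp: reduced_word_def is_word_w0_conj)
  qed
  show ?thesis
  proof
    assume red: "reduced_word n (w0 n \<circ> w \<circ> w0 n) ys"
    then have "\<forall>a\<in>set ys. a \<le> n"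
      by (auto simp: reduced_word_def is_word_def)
    then have "ys = map (\<lambda>a. n - a) (map (\<lambda>a. n - a) ys)"
      by (rule map_diff_map_diff[symmetric])
    moreover have "reduced_word n w (map (\<lambda>a. n - a) ys)"
      using conj[OF red] by simp
    ultimately show "\<exists>xs. ys = map (\<lambda>a. n - a) xs \<and> reduced_word n w xs"
      by blast
  next
    assume "\<exists>xs. ys = map (\<lambda>a. n - a) xs \<and> reduced_word n w xs"
    then show "reduced_word n (w0 n \<circ> w \<circ> w0 n) ys"
      using conj by blast
  qed
qed

lemma supp_perm_w0_conj: "a \<in> supp_perm n w \<Longrightarrow> n - a \<in> supp_perm n (w0 n \<circ> w \<circ> w0 n)"
  unfolding supp_perm_def reduced_word_w0_conj_iff by auto

lemma decreasing_orient_iff: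
  assumes w: "w permutes {1..n}" and "Suc k < n"
  shows "decreasing_orient n w k \<longleftrightarrow> (\<forall>j\<in>{Suc (Suc k)..n}. Suc k \<le> w j)"
proof -
  let ?v = "w0 n \<circ> w \<circ> w0 n" and ?k = "n - Suc k"
  have Suc_k: "Suc ?k = n - k"
    using \<open>Suc k < n\<close> by simp
  have "occurs_before k (Suc k) xs \<longleftrightarrow> occurs_before (Suc ?k) ?k (map (\<lambda>a. n - a) xs)"
    if "reduced_word n w xs" for xs
  proof
    assume "occurs_before k (Suc k) xs"
    then show "occurs_before (Suc ?k) ?k (map (\<lambda>a. n - a) xs)"
      unfolding Suc_k by (rule occurs_before_map)
  next
    assume "occurs_before (Suc ?k) ?k (map (\<lambda>a. n - a) xs)"
    then have "occurs_before (n - (n - k)) (n - (n - Suc k)) (map (\<lambda>a. n - a) (map (\<lambda>a. n - a) xs))"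
      unfolding Suc_k by (rule occurs_before_map)
    moreover have "map (\<lambda>a. n - a) (map (\<lambda>a. n - a) xs) = xs"
      using that by (intro map_diff_map_diff) (auto simp: reduced_word_def is_word_def)
    ultimately show "occurs_before k (Suc k) xs"
      using \<open>Suc k < n\<close> by simp
  qed
  then have "decreasing_orient n w k \<longleftrightarrow> increasing_orient n ?v ?k"
    unfolding decreasing_orient_iff_occurs_before increasing_orient_iff_occurs_before
      reduced_word_w0_conj_iff by blast
  also have "\<dots> \<longleftrightarrow> (\<forall>i\<in>{1..?k}. ?v i \<le> Suc ?k)"
    using increasing_orient_iff[OF w0_conj_permutes[OF w]] \<open>Suc k < n\<close> by simp
  also have "\<dots> \<longleftrightarrow> (\<forall>j\<in>{Suc (Suc k)..n}. Suc k \<le> w j)"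
  proof -
    have "{1..?k} = w0 n ` {Suc (Suc k)..n}"
      using w0_image_atLeastAtMost[of "Suc (Suc k)" n n] \<open>Suc k < n\<close> by simp
    moreover have "w0 n (w j) \<le> Suc ?k \<longleftrightarrow> Suc k \<le> w j" if "j \<in> {Suc (Suc k)..n}" for j
      using that permutes_in_image[OF w, of j] \<open>Suc k < n\<close> by (auto simp: w0_def)
    ultimately show ?thesis
      by simp
  qed
  finally show ?thesis .
qed

lemma reduced_word_high_low_iff_w0_conj:
  assumes "Suc k < n"
  shows "(\<exists>u v. reduced_word n w (u @ v) \<and> (\<forall>a\<in>set u. Suc k \<le> a) \<and> (\<forall>a\<in>set v. a \<le> k))
    \<longleftrightarrow> (\<exists>u v. reduced_word n (w0 n \<circ> w \<circ> w0 n) (u @ v) \<and> (\<forall>a\<in>set u. a \<le> n - Suc k)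
        \<and> (\<forall>a\<in>set v. Suc (n - Suc k) \<le> a))"
proof
  assume "\<exists>u v. reduced_word n w (u @ v) \<and> (\<forall>a\<in>set u. Suc k \<le> a) \<and> (\<forall>a\<in>set v. a \<le> k)"
  then obtain u v where red: "reduced_word n w (u @ v)" and u: "\<forall>a\<in>set u. Suc k \<le> a"
    and v: "\<forall>a\<in>set v. a \<le> k"
    by blast
  have "reduced_word n (w0 n \<circ> w \<circ> w0 n) (map (\<lambda>a. n - a) u @ map (\<lambda>a. n - a) v)"
    unfolding reduced_word_w0_conj_iff using red by (metis map_append)
  moreover have "\<forall>a\<in>set (map (\<lambda>a. n - a) u). a \<le> n - Suc k"
    "\<forall>a\<in>set (map (\<lambda>a. n - a) v). Suc (n - Suc k) \<le> a"
    using u v assms by auto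
  ultimately show "\<exists>u v. reduced_word n (w0 n \<circ> w \<circ> w0 n) (u @ v) \<and> (\<forall>a\<in>set u. a \<le> n - Suc k)
      \<and> (\<forall>a\<in>set v. Suc (n - Suc k) \<le> a)"
    by blast
next
  assume "\<exists>u v. reduced_word n (w0 n \<circ> w \<circ> w0 n) (u @ v) \<and> (\<forall>a\<in>set u. a \<le> n - Suc k)
      \<and> (\<forall>a\<in>set v. Suc (n - Suc k) \<le> a)"
  then obtain u v xs where xs: "u @ v = map (\<lambda>a. n - a) xs" and red: "reduced_word n w xs"
    and u: "\<forall>a\<in>set u. a \<le> n - Suc k" and v: "\<forall>a\<in>set v. Suc (n - Suc k) \<le> a"
    unfolding reduced_word_w0_conj_iff by blast
  then obtain u' v' where "xs = u' @ v'" "u = map (\<lambda>a. n - a) u'" "v = map (\<lambda>a. n - a) v'"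
    by (metis map_eq_append_conv)
  moreover have "\<forall>a\<in>set xs. a < n"
    using red by (auto simp: reduced_word_def is_word_def)
  ultimately have "\<forall>a\<in>set u'. Suc k \<le> a" "\<forall>a\<in>set v'. a \<le> k"
    using u v assms by auto
  with red \<open>xs = u' @ v'\<close> show "\<exists>u v. reduced_word n w (u @ v) \<and> (\<forall>a\<in>set u. Suc k \<le> a)
      \<and> (\<forall>a\<in>set v. a \<le> k)"
    by blast
qed

lemma w0_conj_image_eq_iff:
  assumes "Suc k < n"
  shows "(w0 n \<circ> w \<circ> w0 n) ` {1..n - Suc k} = {1..Suc (n - Suc k)} - {x}
    \<longleftrightarrow> w ` {Suc (Suc k)..n} = {Suc k..n} - {w0 n x}"
proof -
  have low: "w0 n ` {1..n - Suc k} = {Suc (Suc k)..n}" and high: "w0 n ` {Suc k..n} = {1..Suc (n - Suc k)}"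
    using w0_image_atLeastAtMost[of 1 "n - Suc k" n] w0_image_atLeastAtMost[of "Suc k" n n] assms
    by simp_all
  have "(w0 n \<circ> w \<circ> w0 n) ` {1..n - Suc k} = w0 n ` w ` {Suc (Suc k)..n}"
    by (simp only: image_comp[symmetric] low)
  moreover have "{1..Suc (n - Suc k)} - {x} = w0 n ` ({Suc k..n} - {w0 n x})"
    by (simp only: image_set_diff[OF permutes_inj[OF w0_permutes]] high image_insert image_empty w0_w0)
  ultimately show ?thesis
    by (simp add: inj_image_eq_iff[OF permutes_inj[OF w0_permutes]])
qed

lemma high_low_condition_w0_conj_iff:
  assumes w: "w permutes {1..n}" and "Suc k < n"
  shows "(\<exists>x. 1 \<le> x \<and> x < Suc (n - Suc k)
      \<and> (w0 n \<circ> w \<circ> w0 n) ` {1..n - Suc k} = {1..Suc (n - Suc k)} - {x}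
      \<and> Suc (n - Suc k) < inv (w0 n \<circ> w \<circ> w0 n) x)
    \<longleftrightarrow> (\<exists>y. Suc k < y \<and> y \<le> n \<and> w ` {Suc (Suc k)..n} = {Suc k..n} - {y} \<and> inv w y < Suc k)"
proof -
  note image_iff = w0_conj_image_eq_iff[OF \<open>Suc k < n\<close>, of w]
  have range: "inv w y \<in> {1..n} \<longleftrightarrow> y \<in> {1..n}" for y
    by (rule permutes_in_image[OF permutes_inv[OF w]])
  have w0_eq: "w0 n i = Suc n - i" if "i \<in> {1..n}" for i
    using that by (simp add: w0_def)
  show ?thesis
  proof
    assume "\<exists>x. 1 \<le> x \<and> x < Suc (n - Suc k)
      \<and> (w0 n \<circ> w \<circ> w0 n) ` {1..n - Suc k} = {1..Suc (n - Suc k)} - {x}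
      \<and> Suc (n - Suc k) < inv (w0 n \<circ> w \<circ> w0 n) x"
    then obtain x where x: "1 \<le> x" "x < Suc (n - Suc k)"
      "w ` {Suc (Suc k)..n} = {Suc k..n} - {w0 n x}" "Suc (n - Suc k) < w0 n (inv w (w0 n x))"
      unfolding image_iff inv_w0_conj[OF w] by blast
    define y where "y = w0 n x"
    have "x \<in> {1..n}"
      using x by simp
    then have y: "y = Suc n - x" "y \<in> {1..n}"
      unfolding y_def using w0_eq by auto
    then have "w0 n (inv w y) = Suc n - inv w y" "inv w y \<in> {1..n}"
      using w0_eq range by auto
    with x y \<open>Suc k < n\<close>
    show "\<exists>y. Suc k < y \<and> y \<le> n \<and> w ` {Suc (Suc k)..n} = {Suc k..n} - {y} \<and> inv w y < Suc k"
      unfolding y_def by (intro exI[of _ "w0 n x"]) auto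
  next
    assume "\<exists>y. Suc k < y \<and> y \<le> n \<and> w ` {Suc (Suc k)..n} = {Suc k..n} - {y} \<and> inv w y < Suc k"
    then obtain y where y: "Suc k < y" "y \<le> n" "w ` {Suc (Suc k)..n} = {Suc k..n} - {y}" "inv w y < Suc k"
      by blast
    moreover from this have "inv w y \<in> {1..n}"
      using range[of y] by simp
    ultimately have "w0 n y = Suc n - y" "w0 n (inv w y) = Suc n - inv w y" "inv w y \<in> {1..n}"
      using w0_eq by auto
    with y have "1 \<le> w0 n y" "w0 n y < Suc (n - Suc k)" "Suc (n - Suc k) < w0 n (inv w y)"
      by auto
    with y(3) show "\<exists>x. 1 \<le> x \<and> x < Suc (n - Suc k)
      \<and> (w0 n \<circ> w \<circ> w0 n) ` {1..n - Suc k} = {1..Suc (n - Suc k)} - {x}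
      \<and> Suc (n - Suc k) < inv (w0 n \<circ> w \<circ> w0 n) x"
      unfolding image_iff inv_w0_conj[OF w] by (intro exI[of _ "w0 n y"]) simp
  qed
qed

lemma reduced_word_high_low_iff:
  assumes w: "w permutes {1..n}" and k: "k \<in> supp_perm n w" and k': "Suc k \<in> supp_perm n w"
  shows "(\<exists>u v. reduced_word n w (u @ v) \<and> (\<forall>a\<in>set u. Suc k \<le> a) \<and> (\<forall>a\<in>set v. a \<le> k))
    \<longleftrightarrow> (\<exists>y. Suc k < y \<and> y \<le> n \<and> w ` {Suc (Suc k)..n} = {Suc k..n} - {y} \<and> inv w y < Suc k)"
proof -
  have "Suc k < n"
    using supp_perm_bounds(2)[OF k'] .
  have supp: "n - Suc k \<in> supp_perm n (w0 n \<circ> w \<circ> w0 n)" "Suc (n - Suc k) \<in> supp_perm n (w0 n \<circ> w \<circ> w0 n)"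
    using supp_perm_w0_conj[OF k'] supp_perm_w0_conj[OF k] \<open>Suc k < n\<close> by (simp_all add: Suc_diff_Suc)
  show ?thesis
    unfolding reduced_word_high_low_iff_w0_conj[OF \<open>Suc k < n\<close>]
      reduced_word_low_high_iff[OF w0_conj_permutes[OF w] supp]
    by (rule high_low_condition_w0_conj_iff[OF w \<open>Suc k < n\<close>])
qed

theorem theorem3p11:
  fixes n k :: nat and w :: "nat \<Rightarrow> nat"
  assumes "w permutes {1..n}"
    and "k \<in> supp_perm n w" and "k + 1 \<in> supp_perm n w"
  shows "((\<exists>u v. reduced_word n w (u @ v) \<and> (\<forall>a\<in>set u. a \<le> k) \<and> (\<forall>a\<in>set v. a \<ge> k + 1))
           \<longleftrightarrow> (\<exists>x. 1 \<le> x \<and> x < k + 1 \<and> w ` {1..k} = {1..k+1} - {x} \<and> inv w x > k + 1))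
       \<and> ((\<exists>u v. reduced_word n w (u @ v) \<and> (\<forall>a\<in>set u. a \<ge> k + 1) \<and> (\<forall>a\<in>set v. a \<le> k))
           \<longleftrightarrow> (\<exists>y. k + 1 < y \<and> y \<le> n \<and> w ` {k+2..n} = {k+1..n} - {y} \<and> inv w y < k + 1))
       \<and> (interlaced n w k
           \<longleftrightarrow> (\<exists>i\<in>{1..k}. \<exists>j\<in>{k+2..n}. w i > k + 1 \<and> w j < k + 1))"
proof -
  have w: "w permutes {1..n}" and k: "k \<in> supp_perm n w" and k': "Suc k \<in> supp_perm n w"
    using assms by simp_all
  have "1 \<le> k" and "Suc k < n"
    using supp_perm_bounds[OF k] supp_perm_bounds[OF k'] by simp_all
  have "interlaced n w k \<longleftrightarrow>
      \<not> (\<forall>i\<in>{1..k}. w i \<le> Suc k) \<and> \<not> (\<forall>j\<in>{Suc (Suc k)..n}. Suc k \<le> w j)"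
    unfolding interlaced_def increasing_orient_iff[OF w \<open>1 \<le> k\<close>] decreasing_orient_iff[OF w \<open>Suc k < n\<close>]
    using k k' by simp
  then have "interlaced n w k \<longleftrightarrow> (\<exists>i\<in>{1..k}. \<exists>j\<in>{Suc (Suc k)..n}. Suc k < w i \<and> w j < Suc k)"
    by (auto simp: not_le)
  then show ?thesis
    using reduced_word_low_high_iff[OF w k k'] reduced_word_high_low_iff[OF w k k']
    by (simp add: numeral_2_eq_2)
qed

end
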